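(* Assume $\kappa\ge\|f'\|_{C[-\beta,\beta]}$, $\|\phi^0\|_\infty\le\beta$ and $\tau_1<(\kappa m\Gamma(2-\alpha))^{-1/\alpha}$. Then the $L1$-sESAV scheme is energy-stable for arbitrary time steps $\tau_n$, $n\ge2$: $\mathcal E_h[\phi^n,R^n]\le\mathcal E_h[\phi^0,R^0]$ for all $n\ge1$.
   Context: Setting: $\Omega=(0,L)^2$ with periodic boundary conditions; constants $m>0$, $\varepsilon>0$, $\alpha\in(0,1)$. The nonlinearity $f=-F'$ is one of: (double-well) $F(\phi)=\frac14(1-\phi^2)^2$, $f(\phi)=\phi-\phi^3$, with $\beta=1$; or (Flory–Huggins) $F(\phi)=\frac{\theta}{2}[(1+\phi)\ln(1+\phi)+(1-\phi)\ln(1-\phi)]-\frac{\theta_c}{2}\phi^2$, $f(\phi)=\frac{\theta}{2}\ln\frac{1-\phi}{1+\phi}+\theta_c\phi$ on $(-1,1)$, with $\theta_c>\theta>0$ and $\beta\in(0,1)$ the positive root of $f$. In both cases $f(\pm\beta)=0$. Spatial discretization: $M\in\mathbb N$, $h=L/M$; $\mathbb V_h$ is the space of real grid functions $v=\{v_{ij}\}_{i,j\in\mathbb Z}$ that are $M$-periodic in each index; $\langle v,w\rangle=h^2\sum_{i,j=1}^Mv_{ij}w_{ij}$, $\|v\|=\sqrt{\langle v,v\rangle}$, $\|v\|_\infty=\max_{1\le i,j\le M}|v_{ij}|$, $\mathbb V_\beta=\{v\in\mathbb V_h:\|v\|_\infty\le\beta\}$; $\Delta_hv_{ij}=h^{-2}(v_{i+1,j}+v_{i-1,j}+v_{i,j+1}+v_{i,j-1}-4v_{ij})$;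 $\nabla_hv_{ij}=\big(\frac{v_{i+1,j}-v_{ij}}h,\frac{v_{i,j+1}-v_{ij}}h\big)$ and $\|\nabla_hv\|^2=h^2\sum_{i,j=1}^M|\nabla_hv_{ij}|^2$. Scalar functions act on grid functions pointwise. $E_{1h}[v]=\langle F(v),1\rangle$ and $g_h(v,w)=\exp(w)/\exp(E_{1h}[v])$ for $v\in\mathbb V_h$ (with $\|v\|_\infty<1$ in the Flory–Huggins case) and $w\in\mathbb R$. The discrete modified energy is $\mathcal E_h[\phi,R]=\frac{\varepsilon^2}{2}\|\nabla_h\phi\|^2+R$. Auxiliary functional: $V:\mathbb R\to\mathbb R$ satisfies (A1) $V\in C^1(\mathbb R)\cap W^{2,\infty}(\mathbb R)$, $V(1)=1$, $V'(1)=0$, $|V'|\le K_1$; (A2) $0\le V\le K_2$ for a constant $K_2>0$; (A3) $|z_1-1|\le|z_2-1|$ implies $|V(z_1)-1|\le|V(z_2)-1|$. Time grid: $0=t_0<t_1<\dots<t_N=T$, $\tau_k=t_k-t_{k-1}$, $r_k=\tau_k/\tau_{k-1}$ ($k\ge2$), $\nabla_\tau v^k=v^k-v^{k-1}$, $\mathbb D_\tau v^k=\nabla_\tau v^k/\tau_k$, $\omega_\mu(t)=t^{\mu-1}/\Gamma(\mu)$. Constant $\kappa\ge0$; data $\phi^0\in\mathbb V_h$, $R^0\in\mathbb R$. For $n\ge2$ the predicted solution is $\hat\phi^n=\min\{\max\{(1+r_n)\phi^{n-1}-r_n\phi^{n-2},-\beta\},\beta\}$ (pointwise). $L1$-sESAV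 scheme: $A^{(n)}_{n-k}=\frac1{\tau_k}\int_{t_{k-1}}^{t_k}\omega_{1-\alpha}(t_n-s)\,ds$ and $\mathbb D^\alpha_\tau v^n=\sum_{k=1}^nA^{(n)}_{n-k}\nabla_\tau v^k$. For $n=1$, $\hat\phi^1\in\mathbb V_\beta$ is the solution of the nonlinear first-step equation $A^{(1)}_0(\hat\phi^1-\phi^0)=m(\varepsilon^2\Delta_h\hat\phi^1+f(\hat\phi^1))$. For $n\ge1$, with $V^n:=V(g_h(\hat\phi^n,R^{n-1}))$, $(\phi^n,R^n)$ is defined by $\mathbb D^\alpha_\tau\phi^n=m(\varepsilon^2\Delta_h\phi^n+V^nf(\hat\phi^n)-\kappa V^n(\phi^n-\hat\phi^n))$ and $\mathbb D_\tau R^n=V^n\langle-f(\hat\phi^n)+\kappa(\phi^n-\hat\phi^n),\mathbb D_\tau\phi^n\rangle$. *)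

theory Defs
  imports "HOL-Analysis.Analysis"
begin

text \<open>Grid functions: real functions on the integer lattice; the space V_h
consists of the M-periodic ones.\<close>
type_synonym gridfun = "int \<Rightarrow> int \<Rightarrow> real"

definition periodic_grid :: "nat \<Rightarrow> gridfun \<Rightarrow> bool" where
  "periodic_grid M v \<longleftrightarrow> (\<forall>i j. v (i + int M) j = v i j \<and> v i (j + int M) = v i j)"

definition grid_inner :: "real \<Rightarrow> nat \<Rightarrow> gridfun \<Rightarrow> gridfun \<Rightarrow> real" where
  "grid_inner h M v w = h\<^sup>2 * (\<Sum>i\<in>{1..int M}. \<Sum>j\<in>{1..int M}. v i j * w i j)"

definition grid_supnorm :: "nat \<Rightarrow> gridfun \<Rightarrow> real" where
  "grid_supnorm M v = Max {\<bar>v i j\<bar> | i j. i \<in> {1..int M} \<and> j \<in> {1..int M}}"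

definition V_beta :: "nat \<Rightarrow> real \<Rightarrow> gridfun set" where
  "V_beta M \<beta> = {v. periodic_grid M v \<and> grid_supnorm M v \<le> \<beta>}"

definition lap_h :: "real \<Rightarrow> gridfun \<Rightarrow> gridfun" where
  "lap_h h v = (\<lambda>i j. (v (i+1) j + v (i-1) j + v i (j+1) + v i (j-1) - 4 * v i j) / h\<^sup>2)"

definition grad_norm_sq :: "real \<Rightarrow> nat \<Rightarrow> gridfun \<Rightarrow> real" where
  "grad_norm_sq h M v = h\<^sup>2 * (\<Sum>i\<in>{1..int M}. \<Sum>j\<in>{1..int M}.
      ((v (i+1) j - v i j) / h)\<^sup>2 + ((v i (j+1) - v i j) / h)\<^sup>2)"

definition E1h :: "(real \<Rightarrow> real) \<Rightarrow> real \<Rightarrow> nat \<Rightarrow> gridfun \<Rightarrow> real" where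
  "E1h F h M v = grid_inner h M (\<lambda>i j. F (v i j)) (\<lambda>i j. 1)"

definition g_h :: "(real \<Rightarrow> real) \<Rightarrow> real \<Rightarrow> nat \<Rightarrow> gridfun \<Rightarrow> real \<Rightarrow> real" where
  "g_h F h M v w = exp w / exp (E1h F h M v)"

definition energy_h :: "real \<Rightarrow> real \<Rightarrow> nat \<Rightarrow> gridfun \<Rightarrow> real \<Rightarrow> real" where
  "energy_h \<epsilon> h M \<phi> R = \<epsilon>\<^sup>2 / 2 * grad_norm_sq h M \<phi> + R"

definition F_dw :: "real \<Rightarrow> real" where "F_dw x = (1 - x\<^sup>2)\<^sup>2 / 4"
definition f_dw :: "real \<Rightarrow> real" where "f_dw x = x - x ^ 3"
definition F_fh :: "real \<Rightarrow> real \<Rightarrow> real \<Rightarrow> real" where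
  "F_fh \<theta> \<theta>c x = \<theta> / 2 * ((1 + x) * ln (1 + x) + (1 - x) * ln (1 - x)) - \<theta>c / 2 * x\<^sup>2"
definition f_fh :: "real \<Rightarrow> real \<Rightarrow> real \<Rightarrow> real" where
  "f_fh \<theta> \<theta>c x = \<theta> / 2 * ln ((1 - x) / (1 + x)) + \<theta>c * x"

definition tau :: "(nat \<Rightarrow> real) \<Rightarrow> nat \<Rightarrow> real" where
  "tau t k = t k - t (k - 1)"

definition ratio :: "(nat \<Rightarrow> real) \<Rightarrow> nat \<Rightarrow> real" where
  "ratio t k = tau t k / tau t (k - 1)"

definition omega :: "real \<Rightarrow> real \<Rightarrow> real" where
  "omega \<mu> x = x powr (\<mu> - 1) / Gamma \<mu>"

text \<open>L1 coefficient A^{(n)}_{n-k}.\<close>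
definition L1_coef :: "real \<Rightarrow> (nat \<Rightarrow> real) \<Rightarrow> nat \<Rightarrow> nat \<Rightarrow> real" where
  "L1_coef \<alpha> t n k = (1 / tau t k) * integral {t (k - 1) .. t k} (\<lambda>s. omega (1 - \<alpha>) (t n - s))"

definition L1_caputo :: "real \<Rightarrow> (nat \<Rightarrow> real) \<Rightarrow> (nat \<Rightarrow> gridfun) \<Rightarrow> nat \<Rightarrow> gridfun" where
  "L1_caputo \<alpha> t v n = (\<lambda>i j. \<Sum>k\<in>{1..n}. L1_coef \<alpha> t n k * (v k i j - v (k - 1) i j))"

definition clip :: "real \<Rightarrow> real \<Rightarrow> real" where
  "clip \<beta> x = min (max x (- \<beta>)) \<beta>"

end

theory Submission
  imports Defs
begin

text \<open>Pairing the phi-equation with the increment phi^n - phi^(n-1), summing by parts on the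
periodic grid and inserting the R-equation, the stabilised nonlinear terms cancel exactly, which
is the point of the auxiliary variable R. What remains is
E^n - E^(n-1) <= -(1/m) <D_tau^alpha phi^n, phi^n - phi^(n-1)>. Summed over n, the right-hand side
is -1/m times a discrete convolution quadratic form whose Abel-differenced L1 kernel is
nonnegative and nonincreasing in n, by concavity of x^(1-alpha) and convexity of x^(-alpha);
such a form is nonnegative. The hypotheses on kappa, tau_1 and the auxiliary functional V only
guarantee that the scheme is solvable with |phi-hat^n| <= beta; the energy inequality uses none
of them.\<close>

definition powr_slope :: "real \<Rightarrow> real \<Rightarrow> real \<Rightarrow> real" where
  "powr_slope p x y = (y powr p - x powr p) / (y - x)"

lemma slope_le_slope_of_deriv_mono:
  fixes f d :: "real \<Rightarrow> real"
  assumes "a < b" "b < c" and cont: "continuous_on {a..c} f"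
    and deriv: "\<And>x. a < x \<Longrightarrow> x < c \<Longrightarrow> (f has_real_derivative d x) (at x)"
    and mono: "\<And>x y. a < x \<Longrightarrow> x \<le> y \<Longrightarrow> y < c \<Longrightarrow> d x \<le> d y"
  shows "(f b - f a) / (b - a) \<le> (f c - f b) / (c - b)"
proof -
  have mvt: "\<exists>z. x < z \<and> z < y \<and> f y - f x = (y - x) * d z"
    if "a \<le> x" "x < y" "y \<le> c" for x y
  proof -
    have "continuous_on {x..y} f"
      using cont by (rule continuous_on_subset) (use that in auto)
    moreover have "f differentiable (at z)" if "x < z" "z < y" for z
      using deriv[of z] that \<open>a \<le> x\<close> \<open>y \<le> c\<close> real_differentiable_def by force
    ultimately obtain l z where z: "x < z" "z < y" "(f has_real_derivative l) (at z)"
        "f y - f x = (y - x) * l"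
      using MVT[OF \<open>x < y\<close>] by blast
    have "l = d z"
      using DERIV_unique[OF z(3) deriv[of z]] z that by simp
    with z show ?thesis by blast
  qed
  obtain x where x: "a < x" "x < b" "f b - f a = (b - a) * d x"
    using mvt[of a b] assms by auto
  obtain y where y: "b < y" "y < c" "f c - f b = (c - b) * d y"
    using mvt[of b c] assms by auto
  have "d x \<le> d y" using mono x y by auto
  with x y \<open>a < b\<close> \<open>b < c\<close> show ?thesis by simp
qed

lemma powr_slope_antimono:
  assumes p: "0 < p" "p \<le> 1" and "0 \<le> u" "u < v" "v < w"
  shows "powr_slope p v w \<le> powr_slope p u v"
proof -
  let ?g = "\<lambda>x::real. - (x powr p)"
  have neg_slope: "(?g y - ?g x) / (y - x) = - powr_slope p x y" for x y
    unfolding powr_slope_def by (metis minus_diff_minus minus_divide_left)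
  have "(?g v - ?g u) / (v - u) \<le> (?g w - ?g v) / (w - v)"
  proof (rule slope_le_slope_of_deriv_mono[where d = "\<lambda>x. - (p * x powr (p - 1))"])
    show "continuous_on {u..w} ?g"
      by (intro continuous_on_minus continuous_on_powr' continuous_on_id continuous_on_const)
        (use assms in auto)
    show "(?g has_real_derivative - (p * x powr (p - 1))) (at x)" if "u < x" "x < w" for x
      using that assms by (auto intro!: derivative_eq_intros)
    show "- (p * x powr (p - 1)) \<le> - (p * y powr (p - 1))" if "u < x" "x \<le> y" "y < w" for x y
    proof -
      have "y powr (p - 1) \<le> x powr (p - 1)"
        by (rule powr_mono2') (use that assms in auto)
      with \<open>0 < p\<close> show ?thesis by simp
    qed
  qed (use assms in auto)
  then show ?thesis unfolding neg_slope by simp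
qed

lemma convex_on_powr_nonpos:
  assumes "q \<le> 0" shows "convex_on {0<..} (\<lambda>x. x powr q)"
proof (rule f''_ge0_imp_convex)
  show "((\<lambda>x. x powr q) has_real_derivative q * x powr (q - 1)) (at x)" if "x \<in> {0<..}" for x
    using that by (auto intro!: derivative_eq_intros)
  show "((\<lambda>x. q * x powr (q - 1)) has_real_derivative q * ((q - 1) * x powr (q - 2))) (at x)"
    if "x \<in> {0<..}" for x
    using that by (auto intro!: derivative_eq_intros simp: algebra_simps)
  show "0 \<le> q * ((q - 1) * x powr (q - 2))" for x
    using assms by (auto intro!: mult_nonpos_nonpos mult_nonpos_nonneg)
qed simp

lemma powr_slope_mono:
  assumes "q \<le> 0" "0 < u" "u < v" "v < w"
  shows "powr_slope q u v \<le> powr_slope q v w"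
proof -
  have "(u powr q - v powr q) / (u - v) \<le> (u powr q - w powr q) / (u - w)"
       "(u powr q - w powr q) / (u - w) \<le> (v powr q - w powr q) / (v - w)"
    using convex_on_slope_le[OF convex_on_powr_nonpos[OF \<open>q \<le> 0\<close>], of u w v] assms by auto
  moreover have "(x powr q - y powr q) / (x - y) = powr_slope q x y" for x y
    unfolding powr_slope_def by (metis minus_diff_eq minus_divide_divide)
  ultimately show ?thesis by simp
qed

lemma powr_slope_nonpos:
  assumes "q \<le> 0" "0 < u" "u < v"
  shows "powr_slope q u v \<le> 0"
  using assms powr_mono2'[of q u v] unfolding powr_slope_def by (simp add: divide_nonpos_pos)

lemma powr_slope_nonneg:
  assumes "0 \<le> p" "0 \<le> u" "u < v"
  shows "0 \<le> powr_slope p u v"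
  using assms powr_mono2[of p u v] unfolding powr_slope_def by simp

lemma has_real_derivative_powr_slope_shift:
  assumes "x < y" "y < T"
  shows "((\<lambda>T. powr_slope p (T - y) (T - x)) has_real_derivative
           p * powr_slope (p - 1) (T - y) (T - x)) (at T)"
proof -
  have "((\<lambda>T. ((T - x) powr p - (T - y) powr p) / (y - x)) has_real_derivative
          (p * (T - x) powr (p - 1) - p * (T - y) powr (p - 1)) / (y - x)) (at T)"
    using assms by (auto intro!: derivative_eq_intros)
  then show ?thesis
    unfolding powr_slope_def by (simp add: right_diff_distrib)
qed

lemma continuous_on_powr_slope_shift:
  assumes "0 < p" "x < y" "y \<le> T1"
  shows "continuous_on {T1..T2} (\<lambda>T. powr_slope p (T - y) (T - x))"
  unfolding powr_slope_def using assms
  by (intro continuous_intros continuous_on_powr') auto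

lemma powr_slope_shift_antimono:
  assumes "0 < p" "p \<le> 1" "x < y" "y \<le> T1" "T1 \<le> T2"
  shows "powr_slope p (T2 - y) (T2 - x) \<le> powr_slope p (T1 - y) (T1 - x)"
proof (rule DERIV_nonpos_imp_decreasing_open[OF \<open>T1 \<le> T2\<close>])
  fix T assume T: "T1 < T" "T < T2"
  have "((\<lambda>T. powr_slope p (T - y) (T - x)) has_real_derivative
          p * powr_slope (p - 1) (T - y) (T - x)) (at T)"
    by (rule has_real_derivative_powr_slope_shift) (use assms T in auto)
  moreover have "p * powr_slope (p - 1) (T - y) (T - x) \<le> 0"
    by (intro mult_nonneg_nonpos powr_slope_nonpos) (use assms T in auto)
  ultimately show "\<exists>D. ((\<lambda>T. powr_slope p (T - y) (T - x)) has_real_derivative D) (at T) \<and> D \<le> 0"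
    by blast
next
  show "continuous_on {T1..T2} (\<lambda>T. powr_slope p (T - y) (T - x))"
    by (rule continuous_on_powr_slope_shift) (use assms in auto)
qed

lemma powr_slope_gap_shift_antimono:
  assumes "0 < p" "p \<le> 1" "x0 < x1" "x1 < x2" "x2 \<le> T1" "T1 \<le> T2"
  shows "powr_slope p (T2 - x2) (T2 - x1) - powr_slope p (T2 - x1) (T2 - x0)
       \<le> powr_slope p (T1 - x2) (T1 - x1) - powr_slope p (T1 - x1) (T1 - x0)"
proof (rule DERIV_nonpos_imp_decreasing_open[OF \<open>T1 \<le> T2\<close>])
  fix T assume T: "T1 < T" "T < T2"
  have "((\<lambda>T. powr_slope p (T - x2) (T - x1) - powr_slope p (T - x1) (T - x0)) has_real_derivative
      p * powr_slope (p - 1) (T - x2) (T - x1) - p * powr_slope (p - 1) (T - x1) (T - x0)) (at T)"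
    by (intro DERIV_diff has_real_derivative_powr_slope_shift) (use assms T in auto)
  moreover have "powr_slope (p - 1) (T - x2) (T - x1) \<le> powr_slope (p - 1) (T - x1) (T - x0)"
    by (rule powr_slope_mono) (use assms T in auto)
  then have "p * powr_slope (p - 1) (T - x2) (T - x1) - p * powr_slope (p - 1) (T - x1) (T - x0) \<le> 0"
    using \<open>0 < p\<close> by (simp add: mult_left_mono)
  ultimately show "\<exists>D. ((\<lambda>T. powr_slope p (T - x2) (T - x1) - powr_slope p (T - x1) (T - x0))
      has_real_derivative D) (at T) \<and> D \<le> 0"
    by blast
next
  show "continuous_on {T1..T2} (\<lambda>T. powr_slope p (T - x2) (T - x1) - powr_slope p (T - x1) (T - x0))"
    by (intro continuous_on_diff continuous_on_powr_slope_shift) (use assms in auto)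
qed

lemma L1_coef_eq_powr_slope:
  assumes "0 < \<alpha>" "\<alpha> < 1" and "t (l - 1) < t l" "t l \<le> t n"
  shows "L1_coef \<alpha> t n l = powr_slope (1 - \<alpha>) (t n - t l) (t n - t (l - 1)) / Gamma (2 - \<alpha>)"
proof -
  define G where "G = Gamma (2 - \<alpha>)"
  have "1 - \<alpha> \<notin> \<int>\<^sub>\<le>\<^sub>0"
    using assms nonpos_Ints_nonpos by force
  then have G: "G = (1 - \<alpha>) * Gamma (1 - \<alpha>)"
    using Gamma_plus1[of "1 - \<alpha>"] by (simp add: G_def)
  have "G > 0" using assms by (simp add: G_def)
  define P where "P s = - ((t n - s) powr (1 - \<alpha>)) / G" for s
  have "((\<lambda>s. omega (1 - \<alpha>) (t n - s)) has_integral P (t l) - P (t (l - 1))) {t (l - 1)..t l}"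
  proof (rule fundamental_theorem_of_calculus_interior)
    show "continuous_on {t (l - 1)..t l} P"
      unfolding P_def
      by (intro continuous_on_divide continuous_on_minus continuous_on_powr' continuous_on_diff
          continuous_on_const continuous_on_id) (use assms \<open>G > 0\<close> in auto)
    show "(P has_vector_derivative omega (1 - \<alpha>) (t n - s)) (at s)"
      if "s \<in> {t (l - 1)<..<t l}" for s
    proof -
      have "(P has_real_derivative (1 - \<alpha>) * (t n - s) powr (- \<alpha>) / G) (at s)"
        unfolding P_def using that assms \<open>G > 0\<close> by (auto intro!: derivative_eq_intros)
      moreover have "(1 - \<alpha>) * (t n - s) powr (- \<alpha>) / G = omega (1 - \<alpha>) (t n - s)"
        using assms by (simp add: G omega_def)
      ultimately show ?thesis
        by (simp add: has_real_derivative_iff_has_vector_derivative)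
    qed
  qed (use assms in simp)
  then have "integral {t (l - 1)..t l} (\<lambda>s. omega (1 - \<alpha>) (t n - s))
      = ((t n - t (l - 1)) powr (1 - \<alpha>) - (t n - t l) powr (1 - \<alpha>)) / G"
    by (simp add: integral_unique P_def diff_divide_distrib)
  then show ?thesis
    unfolding L1_coef_def powr_slope_def tau_def G_def[symmetric] by simp
qed

definition abel_diff :: "(nat \<Rightarrow> real) \<Rightarrow> nat \<Rightarrow> real" where
  "abel_diff b l = b l - (if l = 1 then 0 else b (l - 1))"

lemma sum_abel_diff: "(\<Sum>l=1..n. abel_diff b l) = (if n = 0 then 0 else b n)"
  by (induction n) (auto simp: abel_diff_def)

lemma sum_by_parts_abel_diff:
  "(\<Sum>l=1..n. b l * w l) = (\<Sum>l=1..n. abel_diff b l * (\<Sum>i=l..n. w i))"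
proof (induction n)
  case (Suc n)
  have "(\<Sum>l=1..Suc n. abel_diff b l * (\<Sum>i=l..Suc n. w i))
      = (\<Sum>l=1..Suc n. abel_diff b l * (\<Sum>i=l..n. w i) + abel_diff b l * w (Suc n))"
    by (rule sum.cong) (auto simp: ring_distribs)
  also have "\<dots> = (\<Sum>l=1..Suc n. abel_diff b l * (\<Sum>i=l..n. w i))
                  + (\<Sum>l=1..Suc n. abel_diff b l) * w (Suc n)"
    by (simp only: sum.distrib sum_distrib_right)
  also have "\<dots> = (\<Sum>l=1..n. abel_diff b l * (\<Sum>i=l..n. w i)) + b (Suc n) * w (Suc n)"
    by (simp only: sum_abel_diff) simp
  finally show ?case using Suc by simp
qed simp

lemma convolution_form_nonneg:
  fixes a :: "nat \<Rightarrow> nat \<Rightarrow> real" and w :: "nat \<Rightarrow> real"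
  assumes nonneg: "\<And>n l. 1 \<le> l \<Longrightarrow> l \<le> n \<Longrightarrow> n \<le> N \<Longrightarrow> 0 \<le> abel_diff (a n) l"
    and antimono: "\<And>n l. 1 \<le> l \<Longrightarrow> l \<le> n \<Longrightarrow> Suc n \<le> N \<Longrightarrow>
        abel_diff (a (Suc n)) l \<le> abel_diff (a n) l"
  shows "0 \<le> (\<Sum>n=1..N. w n * (\<Sum>l=1..n. a n l * w l))"
proof -
  define S where "S n l = (\<Sum>i=l..n. w i)" for n l
  define P where "P n = (\<Sum>l=1..n. abel_diff (a n) l * (S n l)\<^sup>2)" for n
  have step: "P (Suc n) - P n \<le> 2 * (w (Suc n) * (\<Sum>l=1..Suc n. a (Suc n) l * w l))"
    if "Suc n \<le> N" for n
  proof -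
    let ?d = "abel_diff (a (Suc n))"
    have S_Suc: "S (Suc n) l = S n l + w (Suc n)" if "l \<le> Suc n" for l
      using that by (simp add: S_def)
    have by_parts: "(\<Sum>l=1..Suc n. a (Suc n) l * w l) = (\<Sum>l=1..Suc n. ?d l * S (Suc n) l)"
      unfolding S_def by (rule sum_by_parts_abel_diff)
    have "2 * (w (Suc n) * (\<Sum>l=1..Suc n. a (Suc n) l * w l))
        = (\<Sum>l=1..Suc n. ?d l * ((S (Suc n) l)\<^sup>2 - (S n l)\<^sup>2) + ?d l * (w (Suc n))\<^sup>2)"
      unfolding by_parts sum_distrib_left
      by (rule sum.cong) (auto simp: S_Suc power2_eq_square algebra_simps)
    also have "\<dots> = P (Suc n) - (\<Sum>l=1..n. ?d l * (S n l)\<^sup>2) + (\<Sum>l=1..Suc n. ?d l * (w (Suc n))\<^sup>2)"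
      by (simp add: P_def S_def sum.distrib sum_subtractf right_diff_distrib)
    finally have eq: "2 * (w (Suc n) * (\<Sum>l=1..Suc n. a (Suc n) l * w l))
        = P (Suc n) - (\<Sum>l=1..n. ?d l * (S n l)\<^sup>2) + (\<Sum>l=1..Suc n. ?d l * (w (Suc n))\<^sup>2)" .
    have "(\<Sum>l=1..n. ?d l * (S n l)\<^sup>2) \<le> P n"
      unfolding P_def by (rule sum_mono) (use antimono that in \<open>auto intro!: mult_right_mono\<close>)
    moreover have "0 \<le> (\<Sum>l=1..Suc n. ?d l * (w (Suc n))\<^sup>2)"
      by (rule sum_nonneg) (use nonneg that in auto)
    ultimately show ?thesis using eq by linarith
  qed
  have "P n \<le> 2 * (\<Sum>k=1..n. w k * (\<Sum>l=1..k. a k l * w l))" if "n \<le> N" for n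
    using that
  proof (induction n)
    case (Suc n)
    then show ?case using step[of n] by simp
  qed (simp add: P_def)
  moreover have "0 \<le> P N"
    unfolding P_def by (rule sum_nonneg) (use nonneg in auto)
  ultimately show ?thesis by fastforce
qed

lemma strict_mono_on_atMostI:
  fixes t :: "nat \<Rightarrow> 'a::order"
  assumes "\<And>k. 1 \<le> k \<Longrightarrow> k \<le> N \<Longrightarrow> t (k - 1) < t k"
  shows "strict_mono_on {..N} t"
proof (rule strict_mono_onI)
  fix r s assume "r \<in> {..N}" "s \<in> {..N}" "r < s"
  have "t k < t (Suc k)" if "k \<in> {..<N}" for k
    using assms[of "Suc k"] that by simp
  moreover have "{r..<s} \<subseteq> {..<N}"
    using \<open>s \<in> {..N}\<close> by auto
  ultimately show "t r < t s"
    using lift_Suc_mono_less_ivl \<open>r < s\<close> by blast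
qed

lemma L1_coef_abel_diff_Suc_Suc:
  assumes "0 < \<alpha>" "\<alpha> < 1" "strict_mono_on {..N} t" "Suc (Suc k) \<le> n" "n \<le> N"
  shows "abel_diff (L1_coef \<alpha> t n) (Suc (Suc k)) =
    (powr_slope (1 - \<alpha>) (t n - t (Suc (Suc k))) (t n - t (Suc k))
       - powr_slope (1 - \<alpha>) (t n - t (Suc k)) (t n - t k)) / Gamma (2 - \<alpha>)"
proof -
  have "L1_coef \<alpha> t n j = powr_slope (1 - \<alpha>) (t n - t j) (t n - t (j - 1)) / Gamma (2 - \<alpha>)"
    if "j \<in> {Suc k, Suc (Suc k)}" for j
    by (rule L1_coef_eq_powr_slope)
      (use assms that in \<open>auto simp: strict_mono_on_less strict_mono_on_less_eq\<close>)
  then show ?thesis by (simp add: abel_diff_def diff_divide_distrib)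
qed

lemma L1_coef_abel_diff_1:
  assumes "0 < \<alpha>" "\<alpha> < 1" "strict_mono_on {..N} t" "1 \<le> n" "n \<le> N"
  shows "abel_diff (L1_coef \<alpha> t n) 1 = powr_slope (1 - \<alpha>) (t n - t 1) (t n - t 0) / Gamma (2 - \<alpha>)"
  using L1_coef_eq_powr_slope[of \<alpha> t 1 n] assms
  by (simp add: abel_diff_def strict_mono_on_less strict_mono_on_less_eq)

lemma L1_coef_abel_diff_nonneg:
  assumes "0 < \<alpha>" "\<alpha> < 1" "strict_mono_on {..N} t" "1 \<le> l" "l \<le> n" "n \<le> N"
  shows "0 \<le> abel_diff (L1_coef \<alpha> t n) l"
proof -
  have t: "t i < t j \<longleftrightarrow> i < j" "t i \<le> t j \<longleftrightarrow> i \<le> j" if "i \<le> N" "j \<le> N" for i j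
    using assms(3) that by (simp_all add: strict_mono_on_less strict_mono_on_less_eq)
  consider "l = 1" | k where "l = Suc (Suc k)"
    using \<open>1 \<le> l\<close> by (metis One_nat_def Suc_le_D not0_implies_Suc)
  then show ?thesis
  proof cases
    case 1
    then show ?thesis
      using assms t L1_coef_abel_diff_1[of \<alpha> N t n] powr_slope_nonneg[of "1 - \<alpha>" "t n - t 1" "t n - t 0"] by simp
  next
    case (2 k)
    have "powr_slope (1 - \<alpha>) (t n - t (Suc k)) (t n - t k)
        \<le> powr_slope (1 - \<alpha>) (t n - t (Suc (Suc k))) (t n - t (Suc k))"
      by (rule powr_slope_antimono) (use assms 2 t in auto)
    then show ?thesis
      using L1_coef_abel_diff_Suc_Suc[of \<alpha> N t k n] assms 2 by simp
  qed
qed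

lemma L1_coef_abel_diff_antimono:
  assumes "0 < \<alpha>" "\<alpha> < 1" "strict_mono_on {..N} t" "1 \<le> l" "l \<le> n" "Suc n \<le> N"
  shows "abel_diff (L1_coef \<alpha> t (Suc n)) l \<le> abel_diff (L1_coef \<alpha> t n) l"
proof -
  have t: "t i < t j \<longleftrightarrow> i < j" "t i \<le> t j \<longleftrightarrow> i \<le> j" if "i \<le> N" "j \<le> N" for i j
    using assms(3) that by (simp_all add: strict_mono_on_less strict_mono_on_less_eq)
  consider "l = 1" | k where "l = Suc (Suc k)"
    using \<open>1 \<le> l\<close> by (metis One_nat_def Suc_le_D not0_implies_Suc)
  then show ?thesis
  proof cases
    case 1
    have "powr_slope (1 - \<alpha>) (t (Suc n) - t 1) (t (Suc n) - t 0)
        \<le> powr_slope (1 - \<alpha>) (t n - t 1) (t n - t 0)"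
      by (rule powr_slope_shift_antimono) (use assms 1 t in auto)
    then show ?thesis
      using 1 assms L1_coef_abel_diff_1[of \<alpha> N t n] L1_coef_abel_diff_1[of \<alpha> N t "Suc n"] by (simp add: divide_right_mono)
  next
    case (2 k)
    have "powr_slope (1 - \<alpha>) (t (Suc n) - t (Suc (Suc k))) (t (Suc n) - t (Suc k))
          - powr_slope (1 - \<alpha>) (t (Suc n) - t (Suc k)) (t (Suc n) - t k)
        \<le> powr_slope (1 - \<alpha>) (t n - t (Suc (Suc k))) (t n - t (Suc k))
          - powr_slope (1 - \<alpha>) (t n - t (Suc k)) (t n - t k)"
      by (rule powr_slope_gap_shift_antimono) (use assms 2 t in auto)
    then show ?thesis
      using 2 assms L1_coef_abel_diff_Suc_Suc[of \<alpha> N t k n] L1_coef_abel_diff_Suc_Suc[of \<alpha> N t k "Suc n"]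
      by (simp add: divide_right_mono)
  qed
qed

lemma sum_grid_inner_L1_caputo_nonneg:
  assumes "0 < \<alpha>" "\<alpha> < 1" "strict_mono_on {..N} t"
  shows "0 \<le> (\<Sum>n=1..N. grid_inner h M (L1_caputo \<alpha> t v n) (\<lambda>i j. v n i j - v (n - 1) i j))"
proof -
  let ?q = "\<lambda>n i j. (v n i j - v (n - 1) i j) * L1_caputo \<alpha> t v n i j"
  have "(\<Sum>n=1..N. grid_inner h M (L1_caputo \<alpha> t v n) (\<lambda>i j. v n i j - v (n - 1) i j))
      = h\<^sup>2 * (\<Sum>n=1..N. \<Sum>i\<in>{1..int M}. \<Sum>j\<in>{1..int M}. ?q n i j)"
    unfolding grid_inner_def by (simp add: sum_distrib_left mult.commute)
  also have "(\<Sum>n=1..N. \<Sum>i\<in>{1..int M}. \<Sum>j\<in>{1..int M}. ?q n i j)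
      = (\<Sum>i\<in>{1..int M}. \<Sum>j\<in>{1..int M}. \<Sum>n=1..N. ?q n i j)"
    by (subst sum.swap, rule sum.cong[OF refl], rule sum.swap)
  finally have swap: "(\<Sum>n=1..N. grid_inner h M (L1_caputo \<alpha> t v n) (\<lambda>i j. v n i j - v (n - 1) i j))
      = h\<^sup>2 * (\<Sum>i\<in>{1..int M}. \<Sum>j\<in>{1..int M}. \<Sum>n=1..N. ?q n i j)" .
  have "0 \<le> (\<Sum>n=1..N. ?q n i j)" for i j
    unfolding L1_caputo_def
    by (rule convolution_form_nonneg)
      (use assms L1_coef_abel_diff_nonneg L1_coef_abel_diff_antimono in blast)+
  then show ?thesis
    unfolding swap by (simp add: sum_nonneg)
qed

lemma sum_periodic_shift:
  fixes g :: "int \<Rightarrow> real"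
  assumes "M > 0" and per: "\<And>i. g (i + int M) = g i"
  shows "(\<Sum>i\<in>{1..int M}. g (i + 1)) = (\<Sum>i\<in>{1..int M}. g i)"
proof -
  have "(\<Sum>i\<in>{1..int M}. g (i + 1)) = (\<Sum>i\<in>{1..int M}. g (if i = int M then 1 else i + 1))"
    using per[of 1] by (intro sum.cong) (auto simp: add.commute)
  also have "\<dots> = (\<Sum>i\<in>{1..int M}. g i)"
    by (rule sum.reindex_bij_witness[of _ "\<lambda>i. if i = 1 then int M else i - 1"
          "\<lambda>i. if i = int M then 1 else i + 1"]) (use \<open>M > 0\<close> in auto)
  finally show ?thesis .
qed

lemma grid_inner_lap_h:
  assumes "h \<noteq> 0" "M > 0" and pv: "periodic_grid M v" and pu: "periodic_grid M u"
  shows "grid_inner h M (lap_h h v) u =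
    - (\<Sum>i\<in>{1..int M}. \<Sum>j\<in>{1..int M}. (v (i+1) j - v i j) * (u (i+1) j - u i j)
          + (v i (j+1) - v i j) * (u i (j+1) - u i j))"
proof -
  let ?I = "{1..int M}"
  have per: "v (i + int M) j = v i j" "v i (j + int M) = v i j"
            "u (i + int M) j = u i j" "u i (j + int M) = u i j" for i j
    using pv pu unfolding periodic_grid_def by auto
  have per_pred: "v (i + int M - 1) j = v (i - 1) j" "v i (j + int M - 1) = v i (j - 1)" for i j
    using per(1)[of "i - 1" j] per(2)[of i "j - 1"] by (simp_all add: algebra_simps)
  have shift_x: "(\<Sum>i\<in>?I. \<Sum>j\<in>?I. (v i j - v (i-1) j) * u i j)
      = (\<Sum>i\<in>?I. \<Sum>j\<in>?I. (v (i+1) j - v i j) * u (i+1) j)"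
    using sum_periodic_shift[OF \<open>M > 0\<close>, of "\<lambda>i. \<Sum>j\<in>?I. (v i j - v (i-1) j) * u i j"]
    by (simp add: per per_pred)
  have "(\<Sum>j\<in>?I. (v i j - v i (j-1)) * u i j) = (\<Sum>j\<in>?I. (v i (j+1) - v i j) * u i (j+1))" for i
    using sum_periodic_shift[OF \<open>M > 0\<close>, of "\<lambda>j. (v i j - v i (j-1)) * u i j"]
    by (simp add: per per_pred)
  then have shift_y: "(\<Sum>i\<in>?I. \<Sum>j\<in>?I. (v i j - v i (j-1)) * u i j)
      = (\<Sum>i\<in>?I. \<Sum>j\<in>?I. (v i (j+1) - v i j) * u i (j+1))"
    by simp
  have "grid_inner h M (lap_h h v) u = (\<Sum>i\<in>?I. \<Sum>j\<in>?I.
        ((v (i+1) j - v i j) * u i j - (v i j - v (i-1) j) * u i j)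
      + ((v i (j+1) - v i j) * u i j - (v i j - v i (j-1)) * u i j))"
    unfolding grid_inner_def lap_h_def sum_distrib_left
    by (intro sum.cong refl) (use \<open>h \<noteq> 0\<close> in \<open>simp add: field_simps\<close>)
  also have "\<dots> = (\<Sum>i\<in>?I. \<Sum>j\<in>?I. (v (i+1) j - v i j) * u i j)
       - (\<Sum>i\<in>?I. \<Sum>j\<in>?I. (v i j - v (i-1) j) * u i j)
       + (\<Sum>i\<in>?I. \<Sum>j\<in>?I. (v i (j+1) - v i j) * u i j)
       - (\<Sum>i\<in>?I. \<Sum>j\<in>?I. (v i j - v i (j-1)) * u i j)"
    by (simp add: sum.distrib sum_subtractf)
  also have "\<dots> = - (\<Sum>i\<in>?I. \<Sum>j\<in>?I. (v (i+1) j - v i j) * (u (i+1) j - u i j)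
          + (v i (j+1) - v i j) * (u i (j+1) - u i j))"
    unfolding shift_x shift_y by (simp add: sum.distrib sum_subtractf sum_distrib_left algebra_simps)
  finally show ?thesis .
qed

lemma grad_norm_sq_diff_le:
  assumes "h \<noteq> 0" "M > 0" and pv: "periodic_grid M v" and pv': "periodic_grid M v'"
  shows "grad_norm_sq h M v - grad_norm_sq h M v' + 2 * grid_inner h M (lap_h h v) (\<lambda>i j. v i j - v' i j) \<le> 0"
proof -
  let ?I = "{1..int M}"
  have "periodic_grid M (\<lambda>i j. v i j - v' i j)"
    using pv pv' unfolding periodic_grid_def by simp
  note by_parts = grid_inner_lap_h[OF assms(1,2) pv this]
  have grad: "grad_norm_sq h M x = (\<Sum>i\<in>?I. \<Sum>j\<in>?I. (x (i+1) j - x i j)\<^sup>2 + (x i (j+1) - x i j)\<^sup>2)"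
    for x
    unfolding grad_norm_sq_def sum_distrib_left
    by (intro sum.cong refl) (use \<open>h \<noteq> 0\<close> in \<open>simp add: field_simps\<close>)
  have "grad_norm_sq h M v - grad_norm_sq h M v' + 2 * grid_inner h M (lap_h h v) (\<lambda>i j. v i j - v' i j)
     = (\<Sum>i\<in>?I. \<Sum>j\<in>?I. ((v (i+1) j - v i j)\<^sup>2 + (v i (j+1) - v i j)\<^sup>2)
          - ((v' (i+1) j - v' i j)\<^sup>2 + (v' i (j+1) - v' i j)\<^sup>2)
          - 2 * ((v (i+1) j - v i j) * ((v (i+1) j - v' (i+1) j) - (v i j - v' i j))
                + (v i (j+1) - v i j) * ((v i (j+1) - v' i (j+1)) - (v i j - v' i j))))"
    unfolding grad by_parts by (simp add: sum.distrib sum_subtractf sum_distrib_left)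
  also have "\<dots> = - (\<Sum>i\<in>?I. \<Sum>j\<in>?I. ((v (i+1) j - v i j) - (v' (i+1) j - v' i j))\<^sup>2
                                 + ((v i (j+1) - v i j) - (v' i (j+1) - v' i j))\<^sup>2)"
    unfolding sum_negf[symmetric] by (intro sum.cong refl) (simp add: power2_eq_square algebra_simps)
  also have "\<dots> \<le> 0"
    by (simp add: sum_nonneg)
  finally show ?thesis .
qed

lemma grid_inner_scaled_diff_left:
  "grid_inner h M (\<lambda>i j. a * x i j - b * y i j) w = a * grid_inner h M x w - b * grid_inner h M y w"
  unfolding grid_inner_def by (simp add: sum_subtractf sum_distrib_left algebra_simps)

lemma grid_inner_divide_right:
  "grid_inner h M x (\<lambda>i j. y i j / c) = grid_inner h M x y / c"
  unfolding grid_inner_def by (simp add: sum_divide_distrib[symmetric])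

lemma energy_h_step_le:
  assumes "h \<noteq> 0" "M > 0" "m > 0" "periodic_grid M \<phi>'" "periodic_grid M \<phi>"
    and phi_eq: "\<And>i j. D i j = m * (\<epsilon>\<^sup>2 * lap_h h \<phi>' i j - c * X i j)"
    and R_eq: "R' - R = c * grid_inner h M X (\<lambda>i j. \<phi>' i j - \<phi> i j)"
  shows "energy_h \<epsilon> h M \<phi>' R' \<le> energy_h \<epsilon> h M \<phi> R - grid_inner h M D (\<lambda>i j. \<phi>' i j - \<phi> i j) / m"
proof -
  let ?w = "\<lambda>i j. \<phi>' i j - \<phi> i j"
  have "D = (\<lambda>i j. (m * \<epsilon>\<^sup>2) * lap_h h \<phi>' i j - (m * c) * X i j)"
    by (intro ext) (subst phi_eq, simp add: algebra_simps)
  then have "grid_inner h M D ?w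
      = m * (\<epsilon>\<^sup>2 * grid_inner h M (lap_h h \<phi>') ?w - c * grid_inner h M X ?w)"
    by (simp only: grid_inner_scaled_diff_left) (simp add: algebra_simps)
  then have D_over_m: "grid_inner h M D ?w / m
      = \<epsilon>\<^sup>2 * grid_inner h M (lap_h h \<phi>') ?w - c * grid_inner h M X ?w"
    using \<open>m > 0\<close> by simp
  have "grad_norm_sq h M \<phi>' - grad_norm_sq h M \<phi> + 2 * grid_inner h M (lap_h h \<phi>') ?w \<le> 0"
    using grad_norm_sq_diff_le assms(1-5) by blast
  then have "\<epsilon>\<^sup>2 / 2 * (grad_norm_sq h M \<phi>' - grad_norm_sq h M \<phi> + 2 * grid_inner h M (lap_h h \<phi>') ?w) \<le> 0"
    by (simp add: mult_nonneg_nonpos)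
  then show ?thesis
    using R_eq unfolding energy_h_def D_over_m by (simp add: algebra_simps)
qed

lemma le_minus_sum_of_steps:
  fixes E q :: "nat \<Rightarrow> real"
  assumes "\<And>k. 1 \<le> k \<Longrightarrow> k \<le> n \<Longrightarrow> E k \<le> E (k - 1) - q k"
  shows "E n \<le> E 0 - (\<Sum>k=1..n. q k)"
  using assms
proof (induction n)
  case (Suc n)
  have "E n \<le> E 0 - (\<Sum>k=1..n. q k)" using Suc by simp
  with Suc.prems[of "Suc n"] show ?case by simp
qed simp

theorem mainTheorem6:
  fixes L m \<epsilon> \<alpha> \<beta> \<kappa> :: real
    and F f :: "real \<Rightarrow> real"
    and M N :: nat and h :: real
    and V V' :: "real \<Rightarrow> real" and K1 K2 :: real
    and t :: "nat \<Rightarrow> real"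
    and \<phi> \<phi>hat :: "nat \<Rightarrow> gridfun" and R :: "nat \<Rightarrow> real"
  assumes L_pos: "L > 0" and m_pos: "m > 0" and eps_pos: "\<epsilon> > 0"
    and alpha: "0 < \<alpha>" "\<alpha> < 1"
    and M_pos: "M > 0" and h_def: "h = L / real M"
    and nonlin: "(F = F_dw \<and> f = f_dw \<and> \<beta> = 1) \<or>
       (\<exists>\<theta> \<theta>c. 0 < \<theta> \<and> \<theta> < \<theta>c \<and> F = F_fh \<theta> \<theta>c \<and> f = f_fh \<theta> \<theta>c
                  \<and> 0 < \<beta> \<and> \<beta> < 1 \<and> f \<beta> = 0)"
    and A1_deriv: "\<And>z. (V has_real_derivative V' z) (at z)"
    and A1_cont: "continuous_on UNIV V'"
    and A1_W2inf: "\<exists>C. \<forall>x y. \<bar>V' x - V' y\<bar> \<le> C * \<bar>x - y\<bar>"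
    and A1_vals: "V 1 = 1" "V' 1 = 0"
    and A1_bound: "\<And>z. \<bar>V' z\<bar> \<le> K1"
    and A2: "K2 > 0" "\<And>z. 0 \<le> V z \<and> V z \<le> K2"
    and A3: "\<And>z1 z2. \<bar>z1 - 1\<bar> \<le> \<bar>z2 - 1\<bar> \<Longrightarrow> \<bar>V z1 - 1\<bar> \<le> \<bar>V z2 - 1\<bar>"
    and t0: "t 0 = 0"
    and t_mono: "\<And>k. 1 \<le> k \<Longrightarrow> k \<le> N \<Longrightarrow> t (k - 1) < t k"
    and N_pos: "N \<ge> 1"
    and kappa: "\<kappa> \<ge> 0" "\<And>x. x \<in> {-\<beta>..\<beta>} \<Longrightarrow> \<bar>deriv f x\<bar> \<le> \<kappa>"
    and init: "periodic_grid M (\<phi> 0)" "grid_supnorm M (\<phi> 0) \<le> \<beta>"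
    and tau1: "tau t 1 < (\<kappa> * m * Gamma (2 - \<alpha>)) powr (- 1 / \<alpha>)"
    and pred1: "\<phi>hat 1 \<in> V_beta M \<beta>"
      "\<And>i j. L1_coef \<alpha> t 1 1 * (\<phi>hat 1 i j - \<phi> 0 i j)
               = m * (\<epsilon>\<^sup>2 * lap_h h (\<phi>hat 1) i j + f (\<phi>hat 1 i j))"
    and pred: "\<And>n i j. 2 \<le> n \<Longrightarrow> n \<le> N \<Longrightarrow>
       \<phi>hat n i j = clip \<beta> ((1 + ratio t n) * \<phi> (n - 1) i j - ratio t n * \<phi> (n - 2) i j)"
    and sol_per: "\<And>n. 1 \<le> n \<Longrightarrow> n \<le> N \<Longrightarrow> periodic_grid M (\<phi> n)"
    and scheme_phi: "\<And>n i j. 1 \<le> n \<Longrightarrow> n \<le> N \<Longrightarrow>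
       L1_caputo \<alpha> t \<phi> n i j
         = m * (\<epsilon>\<^sup>2 * lap_h h (\<phi> n) i j
                + V (g_h F h M (\<phi>hat n) (R (n - 1))) * f (\<phi>hat n i j)
                - \<kappa> * V (g_h F h M (\<phi>hat n) (R (n - 1))) * (\<phi> n i j - \<phi>hat n i j))"
    and scheme_R: "\<And>n. 1 \<le> n \<Longrightarrow> n \<le> N \<Longrightarrow>
       (R n - R (n - 1)) / tau t n
         = V (g_h F h M (\<phi>hat n) (R (n - 1)))
           * grid_inner h M (\<lambda>i j. - f (\<phi>hat n i j) + \<kappa> * (\<phi> n i j - \<phi>hat n i j))
                            (\<lambda>i j. (\<phi> n i j - \<phi> (n - 1) i j) / tau t n)"
  shows "\<forall>n\<in>{1..N}. energy_h \<epsilon> h M (\<phi> n) (R n) \<le> energy_h \<epsilon> h M (\<phi> 0) (R 0)"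
proof -
  have "h \<noteq> 0" using L_pos M_pos h_def by simp
  have t: "strict_mono_on {..N} t" by (rule strict_mono_on_atMostI) (rule t_mono)
  have per: "periodic_grid M (\<phi> n)" if "n \<le> N" for n
    using init sol_per that by (cases "n = 0") auto
  let ?dissipation = "\<lambda>n. grid_inner h M (L1_caputo \<alpha> t \<phi> n) (\<lambda>i j. \<phi> n i j - \<phi> (n - 1) i j)"
  have step: "energy_h \<epsilon> h M (\<phi> n) (R n) \<le> energy_h \<epsilon> h M (\<phi> (n - 1)) (R (n - 1)) - ?dissipation n / m"
    if n: "1 \<le> n" "n \<le> N" for n
  proof (rule energy_h_step_le[OF \<open>h \<noteq> 0\<close> M_pos m_pos per per])
    let ?sav = "V (g_h F h M (\<phi>hat n) (R (n - 1))) * grid_inner h M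
        (\<lambda>i j. - f (\<phi>hat n i j) + \<kappa> * (\<phi> n i j - \<phi>hat n i j)) (\<lambda>i j. \<phi> n i j - \<phi> (n - 1) i j)"
    have "(R n - R (n - 1)) / tau t n = ?sav / tau t n"
      using scheme_R[OF n] by (simp add: grid_inner_divide_right)
    moreover have "tau t n > 0" using t_mono[OF n] by (simp add: tau_def)
    ultimately show "R n - R (n - 1) = ?sav" by simp
  qed (use n scheme_phi[OF n] in \<open>auto simp: algebra_simps\<close>)
  show ?thesis
  proof
    fix n assume n: "n \<in> {1..N}"
    have "energy_h \<epsilon> h M (\<phi> n) (R n) \<le> energy_h \<epsilon> h M (\<phi> 0) (R 0) - (\<Sum>k=1..n. ?dissipation k / m)"
      by (rule le_minus_sum_of_steps) (use step n in auto)
    moreover have "0 \<le> (\<Sum>k=1..n. ?dissipation k / m)"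
      unfolding sum_divide_distrib[symmetric] using m_pos n
      by (intro divide_nonneg_pos sum_grid_inner_L1_caputo_nonneg[OF alpha monotone_on_subset[OF t]]) auto
    ultimately show "energy_h \<epsilon> h M (\<phi> n) (R n) \<le> energy_h \<epsilon> h M (\<phi> 0) (R 0)"
      by linarith
  qed
qed

end
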